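(* Let $\pi\in[0,1]$, $\epsilon\in\left[0,\tfrac12\right]$, $g>0$ and $c\ge 0$ with $c<(1-\pi)(1-\epsilon)-\pi\epsilon g$. Let $\tilde h\in(0,1)$. Define, for $h\in[0,1]$, the expected aggregate production $$F(h)=\begin{cases}(1-h)+h\left[(1+\pi g)(1-\epsilon)+\pi\epsilon\right] & h<\tilde h \quad(\text{agents exert effort}),\\ (1-h)+h\pi(1+g) & h>\tilde h\quad(\text{agents shirk}),\end{cases}$$ and the expected welfare $$W(h)=\begin{cases}(1-h)+h\left[(1+\pi g)(1-\epsilon)+\pi\epsilon-c\right] & h<\tilde h,\\ (1-h)+h\pi(1+g) & h>\tilde h.\end{cases}$$ Then expected production and welfare drop as $h$ surpasses $\tilde h$: $\lim_{h\uparrow\tilde h}F(h)>\lim_{h\downarrow\tilde h}F(h)$ and $\lim_{h\uparrow\tilde h}W(h)>\lim_{h\downarrow\tilde h}W(h)$.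
   Context: Model: a unit mass of agents; agents $i\le h$ have access to a new technology that is good with probability $\pi$ (production $1+g$ if used and good, $0$ if used and bad, $1$ if not used). Agents who exert effort pay $c$ and obtain a signal that is wrong with probability $\epsilon$, which they follow; agents who shirk use the technology. $\tilde h$ is the threshold of the principal's firing policy: below it she credibly threatens punishment and agents exert effort, above it she does not and agents shirk. Welfare is output less agents' effort costs. *)

theory Defs
  imports Complex_Main
begin

text \<open>Expected aggregate production F(h). The value at h = ht itself is not
specified in the paper; we use the shirking branch there, which does not affect
the one-sided limits.\<close>
definition production :: "real \<Rightarrow> real \<Rightarrow> real \<Rightarrow> real \<Rightarrow> real \<Rightarrow> real" where
  "production \<pi> \<epsilon> g ht h =
     (if h < ht then (1 - h) + h * ((1 + \<pi> * g) * (1 - \<epsilon>) + \<pi> * \<epsilon>)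
      else (1 - h) + h * \<pi> * (1 + g))"

definition welfare :: "real \<Rightarrow> real \<Rightarrow> real \<Rightarrow> real \<Rightarrow> real \<Rightarrow> real \<Rightarrow> real" where
  "welfare \<pi> \<epsilon> g c ht h =
     (if h < ht then (1 - h) + h * ((1 + \<pi> * g) * (1 - \<epsilon>) + \<pi> * \<epsilon> - c)
      else (1 - h) + h * \<pi> * (1 + g))"

end

theory Submission
  imports Defs
begin

text \<open>On each side of \<open>ht\<close>, \<open>F\<close> and \<open>W\<close> are affine in \<open>h\<close>, so their one-sided limits are
\<open>(1 - ht) + ht * y\<close> with \<open>y\<close> the per-agent yield on that side. The drop is therefore \<open>ht\<close>
times the excess of the effort yield \<open>(1 + \<pi> g)(1 - \<epsilon>) + \<pi> \<epsilon>\<close> (less \<open>c\<close> for welfare) over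
the shirking yield \<open>\<pi> (1 + g)\<close>, and that excess is \<open>(1 - \<pi>)(1 - \<epsilon>) - \<pi> \<epsilon> g - c > 0\<close>.\<close>

lemma tendsto_if_less_within_left:
  fixes a :: "'a::linorder_topology"
  assumes "(p \<longlongrightarrow> l) (at a within S)" and "S \<subseteq> {..<a}"
  shows "((\<lambda>x. if x < a then p x else q x) \<longlongrightarrow> l) (at a within S)"
proof -
  have "eventually (\<lambda>x. p x = (if x < a then p x else q x)) (at a within S)"
    using assms(2) by (auto simp: eventually_at_filter intro!: always_eventually)
  with assms(1) show ?thesis
    by (rule Lim_transform_eventually)
qed

lemma tendsto_if_less_within_right:
  fixes a :: "'a::linorder_topology"
  assumes "(q \<longlongrightarrow> l) (at a within S)" and "S \<subseteq> {a..}"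
  shows "((\<lambda>x. if x < a then p x else q x) \<longlongrightarrow> l) (at a within S)"
proof -
  have "eventually (\<lambda>x. q x = (if x < a then p x else q x)) (at a within S)"
    using assms(2) by (auto simp: eventually_at_filter intro!: always_eventually)
  with assms(1) show ?thesis
    by (rule Lim_transform_eventually)
qed

theorem corollary1:
  fixes \<pi> \<epsilon> g c ht :: real
  assumes "0 \<le> \<pi>" "\<pi> \<le> 1" "0 \<le> \<epsilon>" "\<epsilon> \<le> 1/2" "g > 0" "c \<ge> 0"
    and "c < (1 - \<pi>) * (1 - \<epsilon>) - \<pi> * \<epsilon> * g"
    and "0 < ht" "ht < 1"
  shows "\<exists>FL FR WL WR.
           (production \<pi> \<epsilon> g ht \<longlongrightarrow> FL) (at ht within {0..<ht}) \<and>
           (production \<pi> \<epsilon> g ht \<longlongrightarrow> FR) (at ht within {ht<..1}) \<and>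
           (welfare \<pi> \<epsilon> g c ht \<longlongrightarrow> WL) (at ht within {0..<ht}) \<and>
           (welfare \<pi> \<epsilon> g c ht \<longlongrightarrow> WR) (at ht within {ht<..1}) \<and>
           FL > FR \<and> WL > WR"
proof -
  define effort where "effort = (1 + \<pi> * g) * (1 - \<epsilon>) + \<pi> * \<epsilon>"
  define shirk where "shirk = \<pi> * (1 + g)"
  have affine_lim: "((\<lambda>h. (1 - h) + h * y) \<longlongrightarrow> (1 - ht) + ht * y) (at ht within S)"
    for y S by (intro tendsto_intros)
  have production_eq: "production \<pi> \<epsilon> g ht =
      (\<lambda>h. if h < ht then (1 - h) + h * effort else (1 - h) + h * shirk)"
    by (simp add: fun_eq_iff production_def effort_def shirk_def mult.assoc)
  have welfare_eq: "welfare \<pi> \<epsilon> g c ht =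
      (\<lambda>h. if h < ht then (1 - h) + h * (effort - c) else (1 - h) + h * shirk)"
    by (simp add: fun_eq_iff welfare_def effort_def shirk_def mult.assoc)
  have gain: "effort - shirk = (1 - \<pi>) * (1 - \<epsilon>) - \<pi> * \<epsilon> * g"
    unfolding effort_def shirk_def by algebra
  have "(production \<pi> \<epsilon> g ht \<longlongrightarrow> (1 - ht) + ht * effort) (at ht within {0..<ht})"
    "(welfare \<pi> \<epsilon> g c ht \<longlongrightarrow> (1 - ht) + ht * (effort - c)) (at ht within {0..<ht})"
    unfolding production_eq welfare_eq
    by (auto intro!: tendsto_if_less_within_left affine_lim)
  moreover have "(production \<pi> \<epsilon> g ht \<longlongrightarrow> (1 - ht) + ht * shirk) (at ht within {ht<..1})"
    "(welfare \<pi> \<epsilon> g c ht \<longlongrightarrow> (1 - ht) + ht * shirk) (at ht within {ht<..1})"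
    unfolding production_eq welfare_eq
    by (auto intro!: tendsto_if_less_within_right affine_lim)
  moreover have "shirk < effort - c" "shirk < effort"
    using gain assms(6,7) by linarith+
  then have "(1 - ht) + ht * shirk < (1 - ht) + ht * effort"
    "(1 - ht) + ht * shirk < (1 - ht) + ht * (effort - c)"
    using \<open>0 < ht\<close> by simp_all
  ultimately show ?thesis
    by blast
qed

end
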